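(* Let $K$ be an algebraically closed field of characteristic zero and $g\ge 3$. Then $$\alpha(F_{g,3})=\dim Z(F_{g,3})+\binom{g}{2}=\chi(F_{g,3})+g=\frac{2g^3+3g^2-5g}{6}.$$
   Context: For a finite-dimensional Lie algebra $\mathfrak{h}$, $\alpha(\mathfrak{h})$ is the maximal dimension of an abelian subalgebra, $Z(\mathfrak{h})$ is the center, and the index is $\chi(\mathfrak{h})=\min_{\ell\in\mathfrak{h}^*}\dim\mathfrak{h}(\ell)$ where $\mathfrak{h}(\ell)=\{y\in\mathfrak{h}\mid \ell([x,y])=0\ \forall x\in\mathfrak{h}\}$. Lower central series: $\mathfrak{h}^1=\mathfrak{h}$, $\mathfrak{h}^{k+1}=[\mathfrak{h},\mathfrak{h}^k]$. $F_{g,c}:=F_g/F_g^{c+1}$ where $F_g$ is the free Lie algebra on $g$ generators. *)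

theory Defs
  imports "HOL-Library.Function_Algebras" "HOL-Computational_Algebra.Polynomial"
begin

definition lie_dim :: "('k::field \<Rightarrow> 'v::ab_group_add \<Rightarrow> 'v) \<Rightarrow> 'v set \<Rightarrow> nat" where
  "lie_dim sc L = vector_space.dim sc L"

definition lie_alpha :: "('k::field \<Rightarrow> 'v::ab_group_add \<Rightarrow> 'v) \<Rightarrow> 'v set \<Rightarrow> ('v \<Rightarrow> 'v \<Rightarrow> 'v) \<Rightarrow> nat" where
  "lie_alpha sc L br = Sup {vector_space.dim sc A | A.
      module.subspace sc A \<and> A \<subseteq> L \<and> (\<forall>x\<in>A. \<forall>y\<in>A. br x y \<in> A) \<and>
      (\<forall>x\<in>A. \<forall>y\<in>A. br x y = 0)}"

definition lie_center :: "'v::zero set \<Rightarrow> ('v \<Rightarrow> 'v \<Rightarrow> 'v) \<Rightarrow> 'v set" where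
  "lie_center L br = {z \<in> L. \<forall>x\<in>L. br x z = 0}"

definition lie_stab :: "'v set \<Rightarrow> ('v \<Rightarrow> 'v \<Rightarrow> 'v) \<Rightarrow> ('v \<Rightarrow> 'k::field) \<Rightarrow> 'v set" where
  "lie_stab L br l = {y \<in> L. \<forall>x\<in>L. l (br x y) = 0}"

text \<open>Index: minimum of dim h(l) over linear functionals l (every functional on L
  extends to a linear functional on the ambient space).\<close>
definition lie_index :: "('k::field \<Rightarrow> 'v::ab_group_add \<Rightarrow> 'v) \<Rightarrow> 'v set \<Rightarrow> ('v \<Rightarrow> 'v \<Rightarrow> 'v) \<Rightarrow> nat" where
  "lie_index sc L br = Inf {vector_space.dim sc (lie_stab L br l) | l.
      Vector_Spaces.linear sc ((*) :: 'k \<Rightarrow> 'k \<Rightarrow> 'k) l}"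

text \<open>Ambient space: K-valued functions on words (nat lists) = (completed) free associative
  algebra on letters 0,1,2,...  Elements of the truncated algebra K<X_0..X_{g-1}>/(words of length > c).\<close>

definition wscale :: "'k::field \<Rightarrow> (nat list \<Rightarrow> 'k) \<Rightarrow> (nat list \<Rightarrow> 'k)" where
  "wscale a f = (\<lambda>w. a * f w)"

definition tmult :: "nat \<Rightarrow> (nat list \<Rightarrow> 'k::field) \<Rightarrow> (nat list \<Rightarrow> 'k) \<Rightarrow> (nat list \<Rightarrow> 'k)" where
  "tmult c f h = (\<lambda>w. if length w \<le> c then (\<Sum>i\<le>length w. f (take i w) * h (drop i w)) else 0)"

definition tbracket :: "nat \<Rightarrow> (nat list \<Rightarrow> 'k::field) \<Rightarrow> (nat list \<Rightarrow> 'k) \<Rightarrow> (nat list \<Rightarrow> 'k)" where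
  "tbracket c f h = tmult c f h - tmult c h f"

definition gen :: "nat \<Rightarrow> (nat list \<Rightarrow> 'k::field)" where
  "gen i = (\<lambda>w. if w = [i] then 1 else 0)"

text \<open>F_{g,c} = F_g / F_g^{c+1}, realized as the Lie subalgebra generated by X_0,...,X_{g-1}
  in the truncated free associative algebra.\<close>
definition free_nilp :: "nat \<Rightarrow> nat \<Rightarrow> (nat list \<Rightarrow> 'k::field) set" where
  "free_nilp g c = \<Inter>{S. module.subspace wscale S \<and> gen ` {..<g} \<subseteq> S \<and>
      (\<forall>x\<in>S. \<forall>y\<in>S. tbracket c x y \<in> S)}"

definition alg_closed :: "'k::field itself \<Rightarrow> bool" where
  "alg_closed _ \<longleftrightarrow> (\<forall>p :: 'k poly. degree p > 0 \<longrightarrow> (\<exists>x. poly p x = 0))"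

end

theory Submission
  imports Defs
begin

text \<open>
  The Lie algebra F_{g,3} has a basis of basic commutators indexed by words of length at
  most 3: x_i, [x_i,x_j] for i < j, [x_k,[x_i,x_j]] for i < j, i < k, and [x_i,[x_i,x_k]]
  for i < k.  Evaluated at the index words this basis is diagonal, so the dimension of each
  subspace we meet is the number of index words it contains.

  The centre is the degree-3 part.  The span M of the commutators of degree 2 and 3 is
  abelian, and it is of maximal dimension: an abelian subalgebra containing an element a with
  non-zero linear part lies in the centraliser of a, which is spanned by a and the centre.
  For the index, the stabiliser of any functional l contains the subspace of M cut out by
  the g conditions l([x_i,y]) = 0, so the index is at least dim M - g, and an explicit
  functional attains this bound.
\<close>

context vector_space
begin

lemma dim_subset_of_span_finite:
  assumes "S \<subseteq> T" and "T \<subseteq> span F" and "finite F"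
  shows "dim S \<le> dim T"
proof -
  obtain B where B: "B \<subseteq> T" "independent B" "T \<subseteq> span B" "card B = dim T"
    by (rule basis_exists)
  have "finite B"
    using independent_span_bound[OF \<open>finite F\<close> \<open>independent B\<close>] B(1) assms(2) by auto
  moreover have "S \<subseteq> span B"
    using assms(1) B(3) by blast
  ultimately show ?thesis
    using dim_le_card B(4) by metis
qed

lemma dim_le_dim_kernel_add_1:
  assumes "subspace S" and "S \<subseteq> span F" and "finite F"
    and additive: "\<And>x y. \<phi> (x + y) = \<phi> x + \<phi> y"
    and homogeneous: "\<And>c x. \<phi> (c *s x) = c * \<phi> x"
  shows "dim S \<le> dim {y\<in>S. \<phi> y = 0} + 1"
proof (cases "\<forall>y\<in>S. \<phi> y = 0")
  case True
  then have "{y\<in>S. \<phi> y = 0} = S"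
    by blast
  then show ?thesis
    by simp
next
  case False
  then obtain s where s: "s \<in> S" "\<phi> s \<noteq> 0"
    by blast
  let ?K = "{y\<in>S. \<phi> y = 0}"
  obtain B where B: "B \<subseteq> ?K" "independent B" "?K \<subseteq> span B" "card B = dim ?K"
    by (rule basis_exists)
  have "finite B"
    using independent_span_bound[OF \<open>finite F\<close> \<open>independent B\<close>] B(1) assms(2) by auto
  have "y \<in> span (insert s B)" if "y \<in> S" for y
  proof -
    define k where "k = \<phi> y / \<phi> s"
    have "y - k *s s \<in> S"
      using that s(1) \<open>subspace S\<close> by (simp add: subspace_diff subspace_scale)
    have "\<phi> (y - k *s s) = \<phi> (y + (- k) *s s)"
      by (simp add: scale_minus_left)
    also have "\<dots> = 0"
      using s(2) by (simp only: additive homogeneous) (simp add: k_def)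
    finally have "y - k *s s \<in> span B"
      using \<open>y - k *s s \<in> S\<close> B(3) by blast
    then show ?thesis
      using span_breakdown_eq by blast
  qed
  then have "dim S \<le> card (insert s B)"
    using \<open>finite B\<close> by (intro dim_le_card) auto
  also have "\<dots> \<le> dim ?K + 1"
    using B(4) \<open>finite B\<close> by (simp add: card_insert_if)
  finally show ?thesis .
qed

lemma dim_le_dim_kernels_add:
  assumes "subspace S" and "S \<subseteq> span F" and "finite F"
    and additive: "\<And>i x y. \<phi> i (x + y) = \<phi> i x + \<phi> i y"
    and homogeneous: "\<And>i c x. \<phi> i (c *s x) = c * \<phi> i x"
  shows "dim S \<le> dim {y\<in>S. \<forall>i<n. \<phi> i y = 0} + n"
proof (induction n)
  case (Suc n)
  let ?S = "{y\<in>S. \<forall>i<n. \<phi> i y = 0}"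
  have "\<phi> i 0 = 0" for i
    using homogeneous[of i 0 0] by simp
  then have "subspace ?S"
    using \<open>subspace S\<close> by (auto simp: subspace_def additive homogeneous)
  then have "dim ?S \<le> dim {y\<in>?S. \<phi> n y = 0} + 1"
    using assms(2,3) by (intro dim_le_dim_kernel_add_1[where F = F]) (auto simp: additive homogeneous)
  also have "{y\<in>?S. \<phi> n y = 0} = {y\<in>S. \<forall>i<Suc n. \<phi> i y = 0}"
    by (auto simp: less_Suc_eq)
  finally show ?case
    using Suc.IH by simp
qed simp

end

interpretation W: vector_space "wscale :: 'a::field \<Rightarrow> (nat list \<Rightarrow> 'a) \<Rightarrow> _"
  by unfold_locales (auto simp: wscale_def fun_eq_iff algebra_simps)

lemma wscale_apply: "wscale a f w = a * f w"
  by (simp add: wscale_def)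

lemma sum_fun_apply: "(\<Sum>x\<in>A. f x) w = (\<Sum>x\<in>A. f x w)"
  by (induction A rule: infinite_finite_induct) auto

definition monomial :: "nat list \<Rightarrow> nat list \<Rightarrow> 'a::field" where
  "monomial u = (\<lambda>w. if w = u then 1 else 0)"

lemma gen_apply: "gen i w = (if w = [i] then 1 else 0)"
  by (simp add: gen_def)

lemma gen_eq_monomial: "gen i = monomial [i]"
  by (simp add: gen_def monomial_def)

lemma take_drop_eq_iff:
  assumes "i \<le> length w"
  shows "take i w = u \<and> drop i w = v \<longleftrightarrow> i = length u \<and> w = u @ v"
proof
  assume uv: "take i w = u \<and> drop i w = v"
  then have "i = length u"
    using assms by auto
  moreover have "w = u @ v"
    using uv append_take_drop_id[of i w] by simp
  ultimately show "i = length u \<and> w = u @ v" ..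
qed auto

lemma tmult_monomial:
  "tmult c (monomial u) (monomial v) = (if length u + length v \<le> c then monomial (u @ v) else 0)"
proof (rule ext)
  fix w
  have "(\<Sum>i\<le>length w. monomial u (take i w) * monomial v (drop i w))
      = (\<Sum>i\<le>length w. if i = length u then monomial (u @ v) w else 0)"
  proof (rule sum.cong)
    fix i assume "i \<in> {..length w}"
    then have iff: "take i w = u \<and> drop i w = v \<longleftrightarrow> i = length u \<and> w = u @ v"
      by (intro take_drop_eq_iff) simp
    have "monomial u (take i w) * monomial v (drop i w) = (if take i w = u \<and> drop i w = v then 1 else 0)"
      by (simp add: monomial_def)
    also have "\<dots> = (if i = length u then monomial (u @ v) w else 0)"
      unfolding iff by (simp add: monomial_def)
    finally show "monomial u (take i w) * monomial v (drop i w)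
        = (if i = length u then monomial (u @ v) w else 0)" .
  qed simp
  also have "\<dots> = monomial (u @ v) w"
    by (simp add: monomial_def)
  finally show "tmult c (monomial u) (monomial v) w
      = (if length u + length v \<le> c then monomial (u @ v) else 0) w"
    by (auto simp: tmult_def monomial_def)
qed

lemma tbracket_monomial:
  "tbracket c (monomial u) (monomial v)
     = (if length u + length v \<le> c then monomial (u @ v) - monomial (v @ u) else 0)"
  by (simp add: tbracket_def tmult_monomial add.commute)

lemma tmult_add_left: "tmult c (f + h) k = tmult c f k + tmult c h k"
  by (auto simp: tmult_def fun_eq_iff sum.distrib distrib_right)

lemma tmult_add_right: "tmult c k (f + h) = tmult c k f + tmult c k h"
  by (auto simp: tmult_def fun_eq_iff sum.distrib distrib_left)

lemma tmult_diff_left: "tmult c (f - h) k = tmult c f k - tmult c h k"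
  by (auto simp: tmult_def fun_eq_iff sum_subtractf left_diff_distrib)

lemma tmult_diff_right: "tmult c k (f - h) = tmult c k f - tmult c k h"
  by (auto simp: tmult_def fun_eq_iff sum_subtractf right_diff_distrib)

lemma tmult_scale_left: "tmult c (wscale a f) k = wscale a (tmult c f k)"
  by (auto simp: tmult_def fun_eq_iff sum_distrib_left mult.assoc wscale_apply)

lemma tmult_scale_right: "tmult c k (wscale a f) = wscale a (tmult c k f)"
  by (auto simp: tmult_def fun_eq_iff sum_distrib_left mult.left_commute wscale_apply)

lemma tmult_zero_left: "tmult c 0 k = 0"
  by (auto simp: tmult_def fun_eq_iff)

lemma tmult_zero_right: "tmult c k 0 = 0"
  by (auto simp: tmult_def fun_eq_iff)

lemma tbracket_add_left: "tbracket c (f + h) k = tbracket c f k + tbracket c h k"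
  by (simp add: tbracket_def tmult_add_left tmult_add_right)

lemma tbracket_add_right: "tbracket c k (f + h) = tbracket c k f + tbracket c k h"
  by (simp add: tbracket_def tmult_add_left tmult_add_right)

lemma tbracket_diff_right: "tbracket c k (f - h) = tbracket c k f - tbracket c k h"
  by (simp add: tbracket_def tmult_diff_left tmult_diff_right)

lemma tbracket_scale_left: "tbracket c (wscale a f) k = wscale a (tbracket c f k)"
  by (simp add: tbracket_def tmult_scale_left tmult_scale_right fun_eq_iff right_diff_distrib wscale_apply)

lemma tbracket_scale_right: "tbracket c k (wscale a f) = wscale a (tbracket c k f)"
  by (simp add: tbracket_def tmult_scale_left tmult_scale_right fun_eq_iff right_diff_distrib wscale_apply)

lemma tbracket_zero_left: "tbracket c 0 k = 0"
  by (simp add: tbracket_def tmult_zero_left tmult_zero_right)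

lemma tbracket_zero_right: "tbracket c k 0 = 0"
  by (simp add: tbracket_def tmult_zero_left tmult_zero_right)

lemma tbracket_anticomm: "tbracket c x y = - tbracket c y x"
  by (simp add: tbracket_def)

lemma tbracket_self: "tbracket c x x = 0"
  by (simp add: tbracket_def)

lemma tbracket3_apply:
  fixes x y :: "nat list \<Rightarrow> 'a::field"
  assumes "x [] = 0" and "y [] = 0"
  shows "tbracket 3 x y [a, b] = x [a] * y [b] - y [a] * x [b]"
    and "tbracket 3 x y [a, b, c] = x [a] * y [b, c] + x [a, b] * y [c] - y [a] * x [b, c] - y [a, b] * x [c]"
  by (simp_all add: tbracket_def tmult_def atMost_Suc numeral_3_eq_3 assms)

lemma tbracket_in_span:
  assumes "x \<in> W.span S" and "y \<in> W.span S"
    and "\<And>a b. a \<in> S \<Longrightarrow> b \<in> S \<Longrightarrow> tbracket c a b \<in> W.span S"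
  shows "tbracket c x y \<in> W.span S"
proof -
  have right: "tbracket c a y \<in> W.span S" if "a \<in> S" for a
    using assms(2)
  proof (induction rule: W.span_induct)
    case base
    show ?case
      by (auto simp: W.subspace_def tbracket_add_right tbracket_scale_right tbracket_zero_right
          W.span_zero W.span_add W.span_scale)
  qed (use assms(3) that in auto)
  show ?thesis
    using assms(1)
  proof (induction rule: W.span_induct)
    case base
    show ?case
      by (auto simp: W.subspace_def tbracket_add_left tbracket_scale_left tbracket_zero_left
          W.span_zero W.span_add W.span_scale)
  qed (use right in auto)
qed

definition vanishes_below :: "nat \<Rightarrow> (nat list \<Rightarrow> 'a::zero) \<Rightarrow> bool" where
  "vanishes_below n f \<longleftrightarrow> (\<forall>w. length w < n \<longrightarrow> f w = 0)"

lemma vanishes_below_mono: "m \<le> n \<Longrightarrow> vanishes_below n f \<Longrightarrow> vanishes_below m f"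
  by (simp add: vanishes_below_def)

lemma vanishes_below_2_iff: "vanishes_below 2 f \<longleftrightarrow> f [] = 0 \<and> (\<forall>a. f [a] = 0)"
  by (auto simp: vanishes_below_def numeral_2_eq_2 less_Suc_eq length_Suc_conv)

lemma vanishes_below_3_iff:
  "vanishes_below 3 f \<longleftrightarrow> f [] = 0 \<and> (\<forall>a. f [a] = 0) \<and> (\<forall>a b. f [a, b] = 0)"
  by (auto simp: vanishes_below_def numeral_3_eq_3 less_Suc_eq length_Suc_conv)

lemma subspace_vanishes_below: "W.subspace {f :: nat list \<Rightarrow> 'a::field. vanishes_below n f}"
  by (auto simp: W.subspace_def vanishes_below_def wscale_apply)

lemma tmult_eq_0_if_vanishes_below:
  assumes "vanishes_below m f" and "vanishes_below n h" and "c < m + n"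
  shows "tmult c f h = 0"
proof (rule ext)
  fix w
  have "f (take i w) * h (drop i w) = 0" if "i \<le> length w" and "length w \<le> c" for i
  proof (cases "i < m")
    case True
    then show ?thesis
      using assms(1) that by (simp add: vanishes_below_def)
  next
    case False
    then have "length (drop i w) < n"
      using that assms(3) by simp
    then show ?thesis
      using assms(2) by (simp add: vanishes_below_def)
  qed
  then show "tmult c f h w = 0 w"
    by (auto simp: tmult_def intro!: sum.neutral)
qed

lemma tbracket_eq_0_if_vanishes_below:
  assumes "vanishes_below m f" and "vanishes_below n h" and "c < m + n"
  shows "tbracket c f h = 0"
  using tmult_eq_0_if_vanishes_below[OF assms] tmult_eq_0_if_vanishes_below[OF assms(2,1)] assms(3)
  by (simp add: tbracket_def add.commute)

locale diagonal_family =
  fixes H :: "nat list set" and e :: "nat list \<Rightarrow> nat list \<Rightarrow> 'a::field"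
  assumes finite: "finite H"
    and off_diagonal: "\<And>u v. u \<in> H \<Longrightarrow> v \<in> H \<Longrightarrow> u \<noteq> v \<Longrightarrow> e u v = 0"
    and diagonal_nonzero: "\<And>u. u \<in> H \<Longrightarrow> e u u \<noteq> 0"
begin

lemma subfamily: "K \<subseteq> H \<Longrightarrow> diagonal_family K e"
  by unfold_locales (use finite_subset[OF _ finite] off_diagonal diagonal_nonzero in blast)+

lemma inj_on: "inj_on e H"
  by (rule inj_onI) (metis off_diagonal diagonal_nonzero)

lemma sum_apply_diagonal:
  assumes "v \<in> H"
  shows "(\<Sum>u\<in>H. wscale (c u) (e u)) v = c v * e v v"
proof -
  have "(\<Sum>u\<in>H. wscale (c u) (e u)) v = (\<Sum>u\<in>H. c u * e u v)"
    by (simp add: sum_fun_apply wscale_apply)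
  also have "\<dots> = c v * e v v"
    by (rule sum.remove[OF finite assms, THEN trans]) (auto intro!: sum.neutral off_diagonal assms)
  finally show ?thesis .
qed

lemma independent: "W.independent (e ` H)"
proof (rule W.independent_if_scalars_zero)
  fix c x
  assume sum: "(\<Sum>x\<in>e ` H. wscale (c x) x) = 0" and "x \<in> e ` H"
  then obtain u where u: "u \<in> H" "x = e u"
    by blast
  have "0 = (\<Sum>v\<in>H. wscale (c (e v)) (e v)) u"
    using sum by (simp add: sum.reindex[OF inj_on])
  also have "\<dots> = c (e u) * e u u"
    by (rule sum_apply_diagonal[OF u(1)])
  finally show "c x = 0"
    using diagonal_nonzero[OF u(1)] u(2) by simp
qed (use finite in simp)

lemma dim_span: "W.dim (W.span (e ` H)) = card H"
  by (simp add: W.dim_eq_card_independent[OF independent] card_image[OF inj_on])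

lemma span_expansion:
  assumes "y \<in> W.span (e ` H)"
  shows "y = (\<Sum>u\<in>H. wscale (y u / e u u) (e u))"
proof -
  obtain c where "y = (\<Sum>x\<in>e ` H. wscale (c x) x)"
    using W.span_finite[of "e ` H"] assms finite by auto
  then have y: "y = (\<Sum>u\<in>H. wscale (c (e u)) (e u))"
    by (simp add: sum.reindex[OF inj_on])
  have "c (e u) = y u / e u u" if "u \<in> H" for u
    using y sum_apply_diagonal[OF that] diagonal_nonzero[OF that] by simp
  then show ?thesis
    using y by (metis (no_types, lifting) sum.cong)
qed

lemma in_span_Diff_if_vanishes:
  assumes "y \<in> W.span (e ` H)" and "\<And>v. v \<in> H' \<Longrightarrow> y v = 0"
  shows "y \<in> W.span (e ` (H - H'))"
proof -
  have "y = (\<Sum>u\<in>H. wscale (y u / e u u) (e u))"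
    using assms(1) by (rule span_expansion)
  also have "\<dots> = (\<Sum>u\<in>H - H'. wscale (y u / e u u) (e u))"
    by (rule sum.mono_neutral_right[OF finite]) (auto simp: assms(2) fun_eq_iff wscale_apply)
  also have "\<dots> \<in> W.span (e ` (H - H'))"
    by (intro W.span_sum W.span_scale W.span_base) simp
  finally show ?thesis .
qed

end

section \<open>A basis of basic commutators\<close>

lemma gen_in_free_nilp: "i < g \<Longrightarrow> gen i \<in> free_nilp g c"
  by (auto simp: free_nilp_def)

lemma tbracket_in_free_nilp:
  "x \<in> free_nilp g c \<Longrightarrow> y \<in> free_nilp g c \<Longrightarrow> tbracket c x y \<in> free_nilp g c"
  by (auto simp: free_nilp_def)

lemma subspace_free_nilp: "W.subspace (free_nilp g c :: (nat list \<Rightarrow> 'a::field) set)"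
  unfolding free_nilp_def by (rule W.subspace_Inter) auto

definition basic_words1 :: "nat \<Rightarrow> nat list set" where
  "basic_words1 g = {[i] | i. i < g}"

definition basic_words2 :: "nat \<Rightarrow> nat list set" where
  "basic_words2 g = {[i, j] | i j. i < j \<and> j < g}"

definition basic_words3 :: "nat \<Rightarrow> nat list set" where
  "basic_words3 g = {[i, j, k] | i j k. i \<le> j \<and> i < k \<and> j < g \<and> k < g}"

definition basic_words :: "nat \<Rightarrow> nat list set" where
  "basic_words g = basic_words1 g \<union> basic_words2 g \<union> basic_words3 g"

text \<open>A basic commutator is indexed by the unique basic word occurring in its expansion into
  monomials; its coefficient there is \<plusminus>1.\<close>

definition basic :: "nat list \<Rightarrow> nat list \<Rightarrow> 'a::field" where
  "basic w = (case w of
      [i] \<Rightarrow> gen i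
    | [i, j] \<Rightarrow> tbracket 3 (gen i) (gen j)
    | [i, j, k] \<Rightarrow>
        if i = j then tbracket 3 (gen i) (tbracket 3 (gen i) (gen k))
        else tbracket 3 (gen k) (tbracket 3 (gen i) (gen j))
    | _ \<Rightarrow> 0)"

lemma basic_words_cases:
  assumes "u \<in> basic_words g"
  obtains (deg1) i where "u = [i]" "i < g"
  | (deg2) i j where "u = [i, j]" "i < j" "j < g"
  | (deg3) i j k where "u = [i, j, k]" "i < j" "i < k" "j < g" "k < g"
  | (deg3_repeated) i k where "u = [i, i, k]" "i < k" "k < g"
  using assms
  unfolding basic_words_def basic_words1_def basic_words2_def basic_words3_def
  by (auto simp: le_less)

lemma basic_wordsI:
  "i < g \<Longrightarrow> [i] \<in> basic_words g"
  "i < j \<Longrightarrow> j < g \<Longrightarrow> [i, j] \<in> basic_words g"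
  "i \<le> j \<Longrightarrow> i < k \<Longrightarrow> j < g \<Longrightarrow> k < g \<Longrightarrow> [i, j, k] \<in> basic_words g"
  by (auto simp: basic_words_def basic_words1_def basic_words2_def basic_words3_def)

lemma finite_basic_words: "finite (basic_words g)"
proof (rule finite_subset)
  show "basic_words g \<subseteq> {w. set w \<subseteq> {..<g} \<and> length w \<le> 3}"
    by (auto elim!: basic_words_cases)
  show "finite {w. set w \<subseteq> {..<g} \<and> length w \<le> 3}"
    by (rule finite_lists_length_le) simp
qed

lemma finite_basic_words123:
  "finite (basic_words1 g)" "finite (basic_words2 g)" "finite (basic_words3 g)"
  using finite_basic_words[of g] by (simp_all add: basic_words_def)

lemma card_basic_words23: "card (basic_words2 g \<union> basic_words3 g) = card (basic_words2 g) + card (basic_words3 g)"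
  by (rule card_Un_disjoint[OF finite_basic_words123(2,3)]) (auto simp: basic_words2_def basic_words3_def)

lemma card_basic_words: "card (basic_words g) = card (basic_words1 g) + card (basic_words2 g \<union> basic_words3 g)"
  unfolding basic_words_def Un_assoc
proof (rule card_Un_disjoint)
  show "basic_words1 g \<inter> (basic_words2 g \<union> basic_words3 g) = {}"
    by (auto simp: basic_words1_def basic_words2_def basic_words3_def)
qed (simp_all add: finite_basic_words123)

lemma tbracket_gen_gen: "tbracket 3 (gen i) (gen j) = monomial [i, j] - monomial [j, i]"
  by (simp add: gen_eq_monomial tbracket_monomial)

lemma tbracket_gen_tbracket_gen_gen:
  "tbracket 3 (gen k) (tbracket 3 (gen i) (gen j))
     = monomial [k, i, j] - monomial [i, j, k] - (monomial [k, j, i] - monomial [j, i, k])"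
  by (simp add: tbracket_gen_gen tbracket_diff_right gen_eq_monomial tbracket_monomial)

lemma basic_eq_monomials:
  "basic [i] = monomial [i]"
  "basic [i, j] = monomial [i, j] - monomial [j, i]"
  "basic [i, j, k] =
     (if i = j then monomial [i, i, k] - monomial [i, k, i] - (monomial [i, k, i] - monomial [k, i, i])
      else monomial [k, i, j] - monomial [i, j, k] - (monomial [k, j, i] - monomial [j, i, k]))"
    apply (simp add: basic_def gen_eq_monomial)
   apply (simp add: basic_def tbracket_gen_gen)
  apply (simp add: basic_def tbracket_gen_tbracket_gen_gen)
  done

lemma basic_diagonal: "diagonal_family (basic_words g) (basic :: _ \<Rightarrow> _ \<Rightarrow> 'a::field)"
proof
  show "finite (basic_words g)"
    by (rule finite_basic_words)
next
  fix u v
  assume "u \<in> basic_words g" "v \<in> basic_words g" "u \<noteq> v"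
  then show "(basic u v :: 'a) = 0"
    by (elim basic_words_cases) (auto simp: basic_eq_monomials monomial_def)
next
  fix u
  assume "u \<in> basic_words g"
  then show "(basic u u :: 'a) \<noteq> 0"
    by (elim basic_words_cases) (simp_all add: basic_eq_monomials monomial_def)
qed

lemma vanishes_below_basic: "u \<in> basic_words g \<Longrightarrow> vanishes_below (length u) (basic u)"
  by (elim basic_words_cases) (auto simp: vanishes_below_def basic_eq_monomials monomial_def)

lemma basic_in_free_nilp: "u \<in> basic_words g \<Longrightarrow> basic u \<in> free_nilp g 3"
  by (elim basic_words_cases)
    (auto simp: basic_def intro!: tbracket_in_free_nilp gen_in_free_nilp)

lemma tbracket_gen_jacobi:
  "k \<noteq> i \<Longrightarrow> k \<noteq> j \<Longrightarrow> tbracket 3 (gen k) (tbracket 3 (gen i) (gen j)) = basic [k, j, i] - basic [k, i, j]"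
  by (simp add: basic_def tbracket_gen_tbracket_gen_gen fun_eq_iff algebra_simps)

lemma tbracket_basic_in_span:
  assumes u: "u \<in> basic_words g" and v: "v \<in> basic_words g"
  shows "tbracket 3 (basic u) (basic v) \<in> W.span (basic ` basic_words g :: (nat list \<Rightarrow> 'a::field) set)"
proof (cases "3 < length u + length v")
  case True
  then have "tbracket 3 (basic u) (basic v) = (0 :: nat list \<Rightarrow> 'a)"
    using vanishes_below_basic[OF u] vanishes_below_basic[OF v] by (intro tbracket_eq_0_if_vanishes_below)
  then show ?thesis
    by (simp add: W.span_zero)
next
  case False
  let ?S = "W.span (basic ` basic_words g :: (nat list \<Rightarrow> 'a) set)"
  have basic: "w \<in> basic_words g \<Longrightarrow> basic w \<in> ?S" for w
    by (intro W.span_base) simp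
  have deg2: "tbracket 3 (gen i) (gen j) \<in> ?S" if "i < g" "j < g" for i j
  proof -
    consider "i < j" | "i = j" | "j < i"
      by arith
    then show ?thesis
    proof cases
      case 1
      then show ?thesis
        using basic[of "[i, j]"] that by (simp add: basic_def basic_wordsI)
    next
      case 2
      then show ?thesis
        by (simp add: tbracket_self W.span_zero)
    next
      case 3
      then have "tbracket 3 (gen j) (gen i) \<in> ?S"
        using basic[of "[j, i]"] that by (simp add: basic_def basic_wordsI)
      then show ?thesis
        using tbracket_anticomm[of 3 "gen i" "gen j"] W.span_neg by metis
    qed
  qed
  have deg3: "tbracket 3 (gen k) (tbracket 3 (gen i) (gen j)) \<in> ?S" if "i < j" "j < g" "k < g" for i j k
  proof -
    consider "i < k" | "k = i" | "k < i"
      by arith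
    then show ?thesis
    proof cases
      case 1
      then show ?thesis
        using basic[of "[i, j, k]"] that by (simp add: basic_def basic_wordsI)
    next
      case 2
      then show ?thesis
        using basic[of "[i, i, j]"] that by (simp add: basic_def basic_wordsI)
    next
      case 3
      then show ?thesis
        using basic[of "[k, j, i]"] basic[of "[k, i, j]"] that
        by (simp add: tbracket_gen_jacobi basic_wordsI W.span_diff)
    qed
  qed
  from u v False show ?thesis
  proof (elim basic_words_cases)
    fix i j
    assume "u = [i]" "i < g" "v = [j]" "j < g"
    then show ?thesis
      using deg2 by (simp add: basic_def)
  next
    fix k i j
    assume "u = [k]" "k < g" "v = [i, j]" "i < j" "j < g"
    then show ?thesis
      using deg3 by (simp add: basic_def)
  next
    fix k i j
    assume "u = [i, j]" "v = [k]" "k < g" "i < j" "j < g"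
    then have "tbracket 3 (basic u) (basic v) = (- tbracket 3 (gen k) (tbracket 3 (gen i) (gen j)) :: nat list \<Rightarrow> 'a)"
      by (simp add: basic_def tbracket_anticomm[of 3 "tbracket 3 (gen i) (gen j)"])
    then show ?thesis
      using W.span_neg[OF deg3[OF \<open>i < j\<close> \<open>j < g\<close> \<open>k < g\<close>]] by simp
  qed simp_all
qed

lemma free_nilp3_eq_span: "free_nilp g 3 = W.span (basic ` basic_words g :: (nat list \<Rightarrow> 'a::field) set)"
proof
  show "W.span (basic ` basic_words g) \<subseteq> (free_nilp g 3 :: (nat list \<Rightarrow> 'a) set)"
    by (rule W.span_minimal) (auto intro: basic_in_free_nilp subspace_free_nilp)
next
  show "free_nilp g 3 \<subseteq> W.span (basic ` basic_words g :: (nat list \<Rightarrow> 'a) set)"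
    unfolding free_nilp_def
  proof (rule Inter_lower, safe)
    fix i
    assume "i < g"
    then have "basic [i] \<in> basic ` basic_words g"
      by (intro imageI basic_wordsI)
    then have "basic [i] \<in> W.span (basic ` basic_words g :: (nat list \<Rightarrow> 'a) set)"
      by (rule W.span_base)
    then show "gen i \<in> W.span (basic ` basic_words g :: (nat list \<Rightarrow> 'a) set)"
      by (simp add: basic_def)
  next
    fix x y :: "nat list \<Rightarrow> 'a"
    assume "x \<in> W.span (basic ` basic_words g)" "y \<in> W.span (basic ` basic_words g)"
    then show "tbracket 3 x y \<in> W.span (basic ` basic_words g)"
      by (rule tbracket_in_span) (auto intro: tbracket_basic_in_span)
  qed
qed

lemma dim_span_basic:
  "H \<subseteq> basic_words g \<Longrightarrow> W.dim (W.span (basic ` H :: (nat list \<Rightarrow> 'a::field) set)) = card H"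
  by (rule diagonal_family.dim_span[OF diagonal_family.subfamily[OF basic_diagonal]])

lemma span_basic_words_length_ge:
  "W.span (basic ` {u \<in> basic_words g. n \<le> length u})
     = {y :: nat list \<Rightarrow> 'a::field. y \<in> free_nilp g 3 \<and> vanishes_below n y}"
proof (intro equalityI subsetI CollectI conjI)
  fix y :: "nat list \<Rightarrow> 'a"
  assume y: "y \<in> W.span (basic ` {u \<in> basic_words g. n \<le> length u})"
  then show "y \<in> free_nilp g 3"
    using W.span_mono[of "basic ` {u \<in> basic_words g. n \<le> length u}" "basic ` basic_words g"]
    by (auto simp: free_nilp3_eq_span)
  show "vanishes_below n y"
    using y
  proof (induction rule: W.span_induct)
    case base
    show ?case
      by (rule subspace_vanishes_below)
  next
    case (step x)
    then show ?case
      using vanishes_below_basic vanishes_below_mono by blast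
  qed
next
  fix y :: "nat list \<Rightarrow> 'a"
  assume "y \<in> {y. y \<in> free_nilp g 3 \<and> vanishes_below n y}"
  then have "y \<in> W.span (basic ` (basic_words g - {u. length u < n}))"
    by (intro diagonal_family.in_span_Diff_if_vanishes[OF basic_diagonal])
      (auto simp: free_nilp3_eq_span vanishes_below_def)
  moreover have "basic_words g - {u. length u < n} = {u \<in> basic_words g. n \<le> length u}"
    by auto
  ultimately show "y \<in> W.span (basic ` {u \<in> basic_words g. n \<le> length u})"
    by simp
qed

lemma free_nilp3_Nil:
  assumes "y \<in> free_nilp g 3"
  shows "y [] = 0"
proof -
  have "{u \<in> basic_words g. 1 \<le> length u} = basic_words g"
    by (auto elim!: basic_words_cases)
  then have "vanishes_below 1 y"
    using span_basic_words_length_ge[of g 1] free_nilp3_eq_span[of g] assms by auto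
  then show ?thesis
    by (simp add: vanishes_below_def)
qed

lemma free_nilp3_alternating: "y \<in> free_nilp g 3 \<Longrightarrow> y [a, a] = (0 :: 'a::field)"
  unfolding free_nilp3_eq_span
proof (induction rule: W.span_induct)
  case base
  show ?case
    by (auto simp: W.subspace_def wscale_apply)
next
  case (step x)
  then show ?case
    by (auto elim!: basic_words_cases simp: basic_eq_monomials monomial_def)
qed

lemma free_nilp3_antisym: "y \<in> free_nilp g 3 \<Longrightarrow> y [a, b] = - (y [b, a] :: 'a::field)"
  unfolding free_nilp3_eq_span
proof (induction rule: W.span_induct)
  case base
  show ?case
    by (auto simp: W.subspace_def wscale_apply)
next
  case (step x)
  then show ?case
    by (auto elim!: basic_words_cases simp: basic_eq_monomials monomial_def)
qed

section \<open>The centre\<close>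

lemma span_basic_words3:
  "W.span (basic ` basic_words3 g) = {y :: nat list \<Rightarrow> 'a::field. y \<in> free_nilp g 3 \<and> vanishes_below 3 y}"
proof -
  have "{u \<in> basic_words g. 3 \<le> length u} = basic_words3 g"
    by (auto simp: basic_words_def basic_words1_def basic_words2_def basic_words3_def)
  then show ?thesis
    using span_basic_words_length_ge[of g 3] by simp
qed

lemma center_free_nilp3:
  assumes "2 \<le> g"
  shows "lie_center (free_nilp g 3) (tbracket 3) = W.span (basic ` basic_words3 g :: (nat list \<Rightarrow> 'a::field) set)"
proof -
  have "lie_center (free_nilp g 3) (tbracket 3) = {z :: nat list \<Rightarrow> 'a. z \<in> free_nilp g 3 \<and> vanishes_below 3 z}"
  proof (intro equalityI subsetI CollectI conjI)
    fix z :: "nat list \<Rightarrow> 'a"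
    assume "z \<in> lie_center (free_nilp g 3) (tbracket 3)"
    then have z: "z \<in> free_nilp g 3" and central: "\<And>x. x \<in> free_nilp g 3 \<Longrightarrow> tbracket 3 x z = 0"
      by (auto simp: lie_center_def)
    show "z \<in> free_nilp g 3"
      by (rule z)
    have other: "\<exists>i<g. i \<noteq> a" for a
      using assms by (intro exI[of _ "if a = 0 then 1 else 0"]) auto
    have "z [a] = 0" for a
    proof -
      obtain i where i: "i < g" "i \<noteq> a"
        using other by blast
      then have "tbracket 3 (gen i) z [i, a] = z [a]"
        by (simp add: tbracket3_apply free_nilp3_Nil[OF z] gen_apply)
      then show ?thesis
        using central[OF gen_in_free_nilp[OF i(1)]] by simp
    qed
    moreover have "z [a, b] = 0" for a b
    proof -
      obtain i where i: "i < g" "i \<noteq> b"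
        using other by blast
      then have "tbracket 3 (gen i) z [i, a, b] = z [a, b]"
        by (simp add: tbracket3_apply free_nilp3_Nil[OF z] gen_apply)
      then show ?thesis
        using central[OF gen_in_free_nilp[OF i(1)]] by simp
    qed
    ultimately show "vanishes_below 3 z"
      by (simp add: vanishes_below_3_iff free_nilp3_Nil[OF z])
  next
    fix z :: "nat list \<Rightarrow> 'a"
    assume z: "z \<in> {z. z \<in> free_nilp g 3 \<and> vanishes_below 3 z}"
    have "tbracket 3 x z = 0" if "x \<in> free_nilp g 3" for x
      using z free_nilp3_Nil[OF that]
      by (intro tbracket_eq_0_if_vanishes_below[of 1 x 3]) (auto simp: vanishes_below_def)
    then show "z \<in> lie_center (free_nilp g 3) (tbracket 3)"
      using z by (simp add: lie_center_def)
  qed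
  then show ?thesis
    by (simp add: span_basic_words3)
qed

section \<open>Abelian subalgebras\<close>

lemma span_basic_words23:
  "W.span (basic ` (basic_words2 g \<union> basic_words3 g))
     = {y :: nat list \<Rightarrow> 'a::field. y \<in> free_nilp g 3 \<and> vanishes_below 2 y}"
proof -
  have "{u \<in> basic_words g. 2 \<le> length u} = basic_words2 g \<union> basic_words3 g"
    by (auto simp: basic_words_def basic_words1_def basic_words2_def basic_words3_def)
  then show ?thesis
    using span_basic_words_length_ge[of g 2] by simp
qed

lemma tbracket3_eq_0_if_vanishes_below_2:
  "vanishes_below 2 x \<Longrightarrow> vanishes_below 2 y \<Longrightarrow> tbracket 3 x y = 0"
  by (rule tbracket_eq_0_if_vanishes_below[of 2 x 2 y]) simp_all

lemma centralizer_free_nilp3: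
  fixes a y :: "nat list \<Rightarrow> 'a::field"
  assumes a: "a \<in> free_nilp g 3" and y: "y \<in> free_nilp g 3"
    and "a [p] \<noteq> 0" and "tbracket 3 a y = 0"
  shows "y \<in> W.span (insert a (basic ` basic_words3 g))"
proof -
  define y' where "y' = y - wscale (y [p] / a [p]) a"
  have y': "y' \<in> free_nilp g 3"
    unfolding y'_def using a y subspace_free_nilp by (intro W.subspace_diff W.subspace_scale)
  have "y' [p] = 0"
    using \<open>a [p] \<noteq> 0\<close> by (simp add: y'_def wscale_apply)
  have "tbracket 3 a y' = 0"
    using \<open>tbracket 3 a y = 0\<close> by (simp add: y'_def tbracket_diff_right tbracket_scale_right tbracket_self)
  note bracket = tbracket3_apply[of a y', OF free_nilp3_Nil[OF a] free_nilp3_Nil[OF y']]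
  text \<open>Evaluating [a,y'] at [p,v] and at [p,v,w] and dividing by a[p] kills the
    coordinates of y' of degree 1 and 2.\<close>
  have deg1: "y' [v] = 0" for v
    using bracket(1)[of p v] \<open>tbracket 3 a y' = 0\<close> \<open>y' [p] = 0\<close> \<open>a [p] \<noteq> 0\<close> by simp
  have deg2_rel: "a [p] * y' [v, w] = y' [p, v] * a [w]" for v w
    using bracket(2)[of p v w] \<open>tbracket 3 a y' = 0\<close> \<open>y' [p] = 0\<close> deg1 by simp
  have "y' [p, w] = 0" for w
    using deg2_rel[of p w] free_nilp3_alternating[OF y'] \<open>a [p] \<noteq> 0\<close> by simp
  then have deg2: "y' [v, w] = 0" for v w
    using deg2_rel[of v w] \<open>a [p] \<noteq> 0\<close> by simp
  have "y' \<in> W.span (basic ` basic_words3 g)"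
    using y' deg1 deg2 free_nilp3_Nil[OF y'] by (simp add: span_basic_words3 vanishes_below_3_iff)
  then have "y' \<in> W.span (insert a (basic ` basic_words3 g))"
    using W.span_mono[of "basic ` basic_words3 g" "insert a (basic ` basic_words3 g)"] by blast
  moreover have "wscale (y [p] / a [p]) a \<in> W.span (insert a (basic ` basic_words3 g))"
    by (intro W.span_scale W.span_base) simp
  ultimately have "y' + wscale (y [p] / a [p]) a \<in> W.span (insert a (basic ` basic_words3 g))"
    by (rule W.span_add)
  then show ?thesis
    by (simp add: y'_def)
qed

lemma dim_abelian_le:
  fixes A :: "(nat list \<Rightarrow> 'a::field) set"
  assumes "2 \<le> g" and "A \<subseteq> free_nilp g 3"
    and abelian: "\<And>x y. x \<in> A \<Longrightarrow> y \<in> A \<Longrightarrow> tbracket 3 x y = 0"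
  shows "W.dim A \<le> card (basic_words2 g \<union> basic_words3 g)"
proof (cases "\<exists>a\<in>A. \<exists>p. a [p] \<noteq> 0")
  case True
  then obtain a p where a: "a \<in> A" "a [p] \<noteq> 0"
    by blast
  have "A \<subseteq> W.span (insert a (basic ` basic_words3 g))"
    using a assms(2) abelian by (blast intro: centralizer_free_nilp3)
  then have "W.dim A \<le> card (insert a (basic ` basic_words3 g))"
    by (rule W.dim_le_card) (simp add: finite_basic_words123)
  also have "\<dots> \<le> card (basic ` basic_words3 g :: (nat list \<Rightarrow> 'a) set) + 1"
    by (simp add: card_insert_if finite_basic_words123)
  also have "\<dots> \<le> card (basic_words3 g) + 1"
    using card_image_le[OF finite_basic_words123(3), of basic] by simp
  also have "\<dots> \<le> card (basic_words2 g) + card (basic_words3 g)"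
  proof -
    have "[0, 1] \<in> basic_words2 g"
      using assms(1) by (auto simp: basic_words2_def)
    then have "card (basic_words2 g) \<noteq> 0"
      using finite_basic_words123(2) by auto
    then show ?thesis
      by simp
  qed
  also have "\<dots> = card (basic_words2 g \<union> basic_words3 g)"
    by (rule card_basic_words23[symmetric])
  finally show ?thesis .
next
  case False
  then have "A \<subseteq> W.span (basic ` (basic_words2 g \<union> basic_words3 g))"
    using assms(2) by (auto simp: span_basic_words23 vanishes_below_2_iff intro: free_nilp3_Nil)
  then have "W.dim A \<le> card (basic ` (basic_words2 g \<union> basic_words3 g) :: (nat list \<Rightarrow> 'a) set)"
    by (rule W.dim_le_card) (simp add: finite_basic_words123)
  also have "\<dots> \<le> card (basic_words2 g \<union> basic_words3 g)"
    by (rule card_image_le) (simp add: finite_basic_words123)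
  finally show ?thesis .
qed

lemma lie_alpha_free_nilp3:
  assumes "2 \<le> g"
  shows "lie_alpha (wscale :: 'a::field \<Rightarrow> _) (free_nilp g 3) (tbracket 3)
           = card (basic_words2 g \<union> basic_words3 g)"
  unfolding lie_alpha_def
proof (rule cSup_eq_maximum)
  let ?M = "W.span (basic ` (basic_words2 g \<union> basic_words3 g)) :: (nat list \<Rightarrow> 'a) set"
  have subalgebra: "?M \<subseteq> free_nilp g 3" and abelian: "\<forall>x\<in>?M. \<forall>y\<in>?M. tbracket 3 x y = 0"
    by (auto simp: span_basic_words23 tbracket3_eq_0_if_vanishes_below_2)
  have closed: "\<forall>x\<in>?M. \<forall>y\<in>?M. tbracket 3 x y \<in> ?M"
    using abelian by (auto intro: W.span_zero)
  have dim: "W.dim ?M = card (basic_words2 g \<union> basic_words3 g)"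
    by (rule dim_span_basic) (auto simp: basic_words_def)
  show "card (basic_words2 g \<union> basic_words3 g) \<in> {W.dim A |A. W.subspace A \<and> A \<subseteq> free_nilp g 3
      \<and> (\<forall>x\<in>A. \<forall>y\<in>A. tbracket 3 x y \<in> A) \<and> (\<forall>x\<in>A. \<forall>y\<in>A. tbracket 3 x y = (0 :: nat list \<Rightarrow> 'a))}"
    unfolding mem_Collect_eq
    by (intro exI[of _ ?M] conjI) (rule dim[symmetric], rule W.subspace_span, rule subalgebra, rule closed, rule abelian)
next
  fix n
  assume "n \<in> {W.dim A |A. W.subspace A \<and> A \<subseteq> free_nilp g 3
      \<and> (\<forall>x\<in>A. \<forall>y\<in>A. tbracket 3 x y \<in> A) \<and> (\<forall>x\<in>A. \<forall>y\<in>A. tbracket 3 x y = (0 :: nat list \<Rightarrow> 'a))}"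
  then obtain A :: "(nat list \<Rightarrow> 'a) set" where n: "n = W.dim A" and "A \<subseteq> free_nilp g 3"
    and "\<forall>x\<in>A. \<forall>y\<in>A. tbracket 3 x y = 0"
    unfolding mem_Collect_eq by blast
  then have "W.dim A \<le> card (basic_words2 g \<union> basic_words3 g)"
    by (intro dim_abelian_le[OF assms]) auto
  then show "n \<le> card (basic_words2 g \<union> basic_words3 g)"
    by (simp only: n)
qed

section \<open>The index\<close>

lemma card_le_dim_stab_add:
  fixes l :: "(nat list \<Rightarrow> 'a::field) \<Rightarrow> 'a"
  assumes "Vector_Spaces.linear wscale (*) l"
  shows "card (basic_words2 g \<union> basic_words3 g) \<le> W.dim (lie_stab (free_nilp g 3) (tbracket 3) l) + g"
proof -
  interpret l: Vector_Spaces.linear wscale "(*)" l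
    by (fact assms)
  let ?M = "W.span (basic ` (basic_words2 g \<union> basic_words3 g)) :: (nat list \<Rightarrow> 'a) set"
  let ?K = "{y\<in>?M. \<forall>i<g. l (tbracket 3 (gen i) y) = 0}"
  have "?K \<subseteq> lie_stab (free_nilp g 3) (tbracket 3) l"
  proof
    fix y
    assume y: "y \<in> ?K"
    have "l (tbracket 3 x y) = 0" if "x \<in> free_nilp g 3" for x
      using that unfolding free_nilp3_eq_span
    proof (induction rule: W.span_induct)
      case base
      show ?case
        by (auto simp: W.subspace_def tbracket_add_left tbracket_scale_left tbracket_zero_left
            l.add l.scale l.zero)
    next
      case (step x)
      then obtain u where u: "u \<in> basic_words g" and x: "x = basic u"
        by blast
      show ?case
      proof (cases "u \<in> basic_words1 g")
        case True
        then show ?thesis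
          using y x by (auto simp: basic_words1_def basic_def)
      next
        case False
        then have "x \<in> ?M"
          using u x by (auto simp: basic_words_def intro: W.span_base)
        then have "tbracket 3 x y = 0"
          using y by (simp add: span_basic_words23 tbracket3_eq_0_if_vanishes_below_2)
        then show ?thesis
          by (simp only: l.zero)
      qed
    qed
    then show "y \<in> lie_stab (free_nilp g 3) (tbracket 3) l"
      using y by (simp add: lie_stab_def span_basic_words23)
  qed
  then have "W.dim ?K \<le> W.dim (lie_stab (free_nilp g 3) (tbracket 3) l)"
    by (rule W.dim_subset_of_span_finite[where F = "basic ` basic_words g"])
      (auto simp: lie_stab_def free_nilp3_eq_span finite_basic_words)
  moreover have "W.dim ?M \<le> W.dim ?K + g"
    by (rule W.dim_le_dim_kernels_add[where F = "basic ` (basic_words2 g \<union> basic_words3 g)"])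
      (simp_all add: finite_basic_words123 l.add l.scale tbracket_add_right tbracket_scale_right)
  moreover have "W.dim ?M = card (basic_words2 g \<union> basic_words3 g)"
    by (rule dim_span_basic) (auto simp: basic_words_def)
  ultimately show ?thesis
    by linarith
qed

text \<open>On [x_i,y], [[x_0,x_k],y] and [[x_1,x_2],y] this functional reads off the coordinates
  y[i], y[0,k] and y[1,2] (up to a factor 2 and coordinates already known to vanish), so its
  stabiliser misses the 2g basic words of \<open>index_words\<close>.\<close>

definition index_functional :: "nat \<Rightarrow> (nat list \<Rightarrow> 'a::field) \<Rightarrow> 'a" where
  "index_functional g f = (\<Sum>k\<in>{1..<g}. f [k, 0, k]) + f [1, 2, 0]"

definition index_words :: "nat \<Rightarrow> nat list set" where
  "index_words g = basic_words1 g \<union> (\<lambda>k. [0, k]) ` {1..<g} \<union> {[1, 2]}"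

lemma linear_index_functional: "Vector_Spaces.linear (wscale :: 'a::field \<Rightarrow> _) (*) (index_functional g)"
proof -
  have "vector_space ((*) :: 'a \<Rightarrow> 'a \<Rightarrow> 'a)"
    by unfold_locales (simp_all add: algebra_simps)
  then show ?thesis
    unfolding Vector_Spaces.linear_iff
    by (auto simp: W.vector_space_axioms index_functional_def sum.distrib sum_distrib_left
        wscale_apply distrib_left)
qed

lemma index_functional_tbracket_gen:
  fixes y :: "nat list \<Rightarrow> 'a::field"
  assumes "y [] = 0"
  shows "index_functional g (tbracket 3 (gen i) y)
     = (if 1 \<le> i \<and> i < g then y [0, i] - y [i, 0] else 0)
       + ((if i = 1 then y [2, 0] else 0) - (if i = 0 then y [1, 2] else 0))"
proof -
  have "gen i [] = (0 :: 'a)"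
    by (simp add: gen_apply)
  note bracket = tbracket3_apply(2)[of "gen i" y, OF this assms]
  have "(\<Sum>k\<in>{1..<g}. tbracket 3 (gen i) y [k, 0, k])
      = (\<Sum>k\<in>{1..<g}. if k = i then y [0, k] - y [k, 0] else 0)"
    by (rule sum.cong) (auto simp: bracket gen_apply)
  also have "\<dots> = (if 1 \<le> i \<and> i < g then y [0, i] - y [i, 0] else 0)"
    by (simp add: sum.delta')
  finally show ?thesis
    by (simp add: index_functional_def bracket gen_apply)
qed

lemma index_functional_tbracket_gen0_gen:
  fixes y :: "nat list \<Rightarrow> 'a::field"
  assumes "y [] = 0" and "1 \<le> k"
  shows "index_functional g (tbracket 3 (tbracket 3 (gen 0) (gen k)) y)
     = (if k < g then - 2 * y [k] else 0) + (if k = 2 then y [1] else 0)"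
proof -
  let ?x = "tbracket 3 (gen 0) (gen k) :: nat list \<Rightarrow> 'a"
  have x: "?x w = (if w = [0, k] then 1 else 0) - (if w = [k, 0] then 1 else 0)" for w
    by (simp add: tbracket_gen_gen monomial_def)
  note bracket = tbracket3_apply(2)[of ?x y, OF _ assms(1)]
  have "(\<Sum>k'\<in>{1..<g}. tbracket 3 ?x y [k', 0, k']) = (\<Sum>k'\<in>{1..<g}. if k' = k then - 2 * y [k'] else 0)"
    by (rule sum.cong) (use assms(2) in \<open>auto simp: bracket x\<close>)
  also have "\<dots> = (if k < g then - 2 * y [k] else 0)"
    using assms(2) by (simp add: sum.delta')
  finally show ?thesis
    using assms(2) by (simp add: index_functional_def bracket x)
qed

lemma index_functional_tbracket_gen1_gen2:
  fixes y :: "nat list \<Rightarrow> 'a::field"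
  assumes "y [] = 0"
  shows "index_functional g (tbracket 3 (tbracket 3 (gen 1) (gen 2)) y) = y [0]"
proof -
  define x where "x = (tbracket 3 (gen 1) (gen 2) :: nat list \<Rightarrow> 'a)"
  have x: "x w = (if w = [1, 2] then 1 else 0) - (if w = [2, 1] then 1 else 0)" for w
    by (simp add: x_def tbracket_gen_gen monomial_def)
  note bracket = tbracket3_apply(2)[of x y, OF _ assms]
  have "(\<Sum>k\<in>{1..<g}. tbracket 3 x y [k, 0, k]) = 0"
    by (rule sum.neutral) (auto simp: bracket x)
  then have "index_functional g (tbracket 3 x y) = y [0]"
    by (simp add: index_functional_def bracket x)
  then show ?thesis
    by (simp add: x_def)
qed

lemma stab_index_functional_vanishes:
  fixes y :: "nat list \<Rightarrow> 'a::field_char_0"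
  assumes "3 \<le> g" and "y \<in> lie_stab (free_nilp g 3) (tbracket 3) (index_functional g)"
    and "v \<in> index_words g"
  shows "y v = 0"
proof -
  have y: "y \<in> free_nilp g 3"
    using assms(2) by (simp add: lie_stab_def)
  have stab: "index_functional g (tbracket 3 x y) = 0" if "x \<in> free_nilp g 3" for x
    using assms(2) that by (simp add: lie_stab_def)
  have "y [] = 0"
    by (rule free_nilp3_Nil[OF y])
  have antisym: "y [a, b] = - y [b, a]" for a b
    by (rule free_nilp3_antisym[OF y])
  have gen_bracket: "index_functional g (tbracket 3 (gen i) y) = 0" if "i < g" for i
    using stab gen_in_free_nilp that by blast
  have commutator_bracket: "index_functional g (tbracket 3 (tbracket 3 (gen i) (gen j)) y) = 0"
    if "i < g" "j < g" for i j
    using stab gen_in_free_nilp tbracket_in_free_nilp that by blast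
  have deg1: "(if k < g then - 2 * y [k] else 0) + (if k = 2 then y [1] else 0) = 0"
    if "1 \<le> k" "k < g" for k
    using commutator_bracket[of 0 k] index_functional_tbracket_gen0_gen[of y k g, OF \<open>y [] = 0\<close> that(1)]
      that assms(1) by simp
  have deg2: "(if 1 \<le> i \<and> i < g then y [0, i] - y [i, 0] else 0)
     + ((if i = 1 then y [2, 0] else 0) - (if i = 0 then y [1, 2] else 0)) = 0" if "i < g" for i
    using gen_bracket[OF that] index_functional_tbracket_gen[of y g i, OF \<open>y [] = 0\<close>] by simp
  have "y [0] = 0"
    using commutator_bracket[of 1 2] index_functional_tbracket_gen1_gen2[of y g, OF \<open>y [] = 0\<close>]
      assms(1) by simp
  moreover have "y [1] = 0"
    using deg1[of 1] assms(1) by simp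
  moreover have "y [2] = 0"
    using deg1[of 2] assms(1) \<open>y [1] = 0\<close> by simp
  moreover have "y [k] = 0" if "3 \<le> k" "k < g" for k
    using deg1[of k] that by simp
  ultimately have y1: "y [k] = 0" if "k < g" for k
    using that by (metis One_nat_def less_2_cases not_less numeral_2_eq_2 numeral_3_eq_3 less_Suc_eq)
  have "y [1, 2] = 0"
    using deg2[of 0] assms(1) by simp
  moreover have "y [0, 2] = 0"
    using deg2[of 2] assms(1) antisym[of 2 0] by simp
  moreover have "y [0, 1] = 0"
    using deg2[of 1] assms(1) antisym[of 1 0] antisym[of 2 0] \<open>y [0, 2] = 0\<close> by simp
  moreover have "y [0, k] = 0" if "3 \<le> k" "k < g" for k
    using deg2[of k] that antisym[of k 0] by simp
  ultimately have y2: "y [0, k] = 0" if "1 \<le> k" "k < g" for k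
    using that by (metis One_nat_def le_antisym not_less_eq_eq numeral_2_eq_2 numeral_3_eq_3)
  show ?thesis
    using assms(3) y1 y2 \<open>y [1, 2] = 0\<close> by (auto simp: index_words_def basic_words1_def)
qed

lemma index_words_subset: "3 \<le> g \<Longrightarrow> index_words g \<subseteq> basic_words g"
  by (auto simp: index_words_def basic_words_def basic_words2_def)

lemma card_basic_words1: "card (basic_words1 g) = g"
proof -
  have "basic_words1 g = (\<lambda>i. [i]) ` {..<g}"
    by (auto simp: basic_words1_def)
  then show ?thesis
    by (simp add: card_image inj_on_def)
qed

lemma card_index_words: "3 \<le> g \<Longrightarrow> card (index_words g) = 2 * g"
proof -
  assume "3 \<le> g"
  have "card ((\<lambda>k. [0, k]) ` {1..<g}) = g - 1"
    by (simp add: card_image inj_on_def)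
  moreover have "basic_words1 g \<inter> (\<lambda>k. [0, k]) ` {1..<g} = {}"
    by (auto simp: basic_words1_def)
  ultimately have "card (basic_words1 g \<union> (\<lambda>k. [0, k]) ` {1..<g}) = g + (g - 1)"
    by (simp add: card_Un_disjoint card_basic_words1 finite_basic_words123)
  moreover have "[1, 2] \<notin> basic_words1 g \<union> (\<lambda>k. [0, k]) ` {1..<g}"
    by (auto simp: basic_words1_def)
  ultimately show ?thesis
    using \<open>3 \<le> g\<close> by (simp add: index_words_def finite_basic_words123)
qed

lemma lie_index_free_nilp3:
  assumes "3 \<le> g"
  shows "lie_index (wscale :: 'a::field_char_0 \<Rightarrow> _) (free_nilp g 3) (tbracket 3) + g
           = card (basic_words2 g \<union> basic_words3 g)"
proof -
  let ?N = "card (basic_words2 g \<union> basic_words3 g)"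
  let ?stab = "\<lambda>l. W.dim (lie_stab (free_nilp g 3) (tbracket 3) l :: (nat list \<Rightarrow> 'a) set)"
  have "lie_stab (free_nilp g 3) (tbracket 3) (index_functional g)
      \<subseteq> W.span (basic ` (basic_words g - index_words g) :: (nat list \<Rightarrow> 'a) set)"
  proof
    fix y :: "nat list \<Rightarrow> 'a"
    assume y: "y \<in> lie_stab (free_nilp g 3) (tbracket 3) (index_functional g)"
    then have "y \<in> W.span (basic ` basic_words g)"
      by (simp add: lie_stab_def free_nilp3_eq_span)
    then show "y \<in> W.span (basic ` (basic_words g - index_words g))"
      using stab_index_functional_vanishes[OF assms y]
      by (rule diagonal_family.in_span_Diff_if_vanishes[OF basic_diagonal])
  qed
  then have "?stab (index_functional g) \<le> card (basic ` (basic_words g - index_words g) :: (nat list \<Rightarrow> 'a) set)"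
    by (rule W.dim_le_card) (simp add: finite_basic_words)
  also have "\<dots> \<le> card (basic_words g - index_words g)"
    by (rule card_image_le) (simp add: finite_basic_words)
  also have "\<dots> = card (basic_words g) - card (index_words g)"
    using index_words_subset[OF assms] finite_basic_words by (intro card_Diff_subset) (auto intro: finite_subset)
  finally have upper: "?stab (index_functional g) + g \<le> ?N"
    using card_basic_words[of g] card_basic_words1[of g] card_index_words[OF assms]
      card_mono[OF finite_basic_words index_words_subset[OF assms]] by linarith
  have lower: "?N \<le> ?stab l + g" if "Vector_Spaces.linear wscale (*) l" for l
    using card_le_dim_stab_add[OF that] .
  have "lie_index (wscale :: 'a \<Rightarrow> _) (free_nilp g 3) (tbracket 3) = ?stab (index_functional g)"
    unfolding lie_index_def
  proof (rule cInf_eq_minimum)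
    show "?stab (index_functional g)
        \<in> {?stab l |l. Vector_Spaces.linear (wscale :: 'a \<Rightarrow> _) (*) l}"
      using linear_index_functional by blast
  next
    fix n
    assume "n \<in> {?stab l |l. Vector_Spaces.linear (wscale :: 'a \<Rightarrow> _) (*) l}"
    then obtain l where "n = ?stab l" and "Vector_Spaces.linear (wscale :: 'a \<Rightarrow> _) (*) l"
      by blast
    then show "?stab (index_functional g) \<le> n"
      using upper lower by fastforce
  qed
  then show ?thesis
    using upper lower[OF linear_index_functional[of g]] by simp
qed

lemma card_basic_words2: "card (basic_words2 g) = g choose 2"
proof -
  have "basic_words2 g = (\<Union>i<g. (\<lambda>j. [i, j]) ` {i<..<g})"
    by (auto simp: basic_words2_def image_iff)
  then have "card (basic_words2 g) = (\<Sum>i<g. card ((\<lambda>j. [i, j]) ` {i<..<g}))"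
    by (auto intro: card_UN_disjoint)
  also have "\<dots> = (\<Sum>i<g. g - Suc i)"
    by (simp add: card_image inj_on_def)
  also have "\<dots> = (\<Sum>m<g. m)"
    by (rule sum.nat_diff_reindex)
  also have "\<dots> = g choose 2"
    by (induction g) (simp_all add: numeral_2_eq_2)
  finally show ?thesis .
qed

lemma card_basic_words3: "3 * card (basic_words3 g) + g = g ^ 3"
proof -
  have "basic_words3 g = (\<Union>i<g. (\<lambda>(j, k). [i, j, k]) ` ({i..<g} \<times> {i<..<g}))"
    by (auto simp: basic_words3_def image_iff)
  then have "card (basic_words3 g) = (\<Sum>i<g. card ((\<lambda>(j, k). [i, j, k]) ` ({i..<g} \<times> {i<..<g})))"
    by (auto intro: card_UN_disjoint)
  also have "\<dots> = (\<Sum>i<g. Suc (g - Suc i) * (g - Suc i))"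
    by (intro sum.cong) (auto simp: card_image inj_on_def card_cartesian_product Suc_diff_Suc)
  also have "\<dots> = (\<Sum>m<g. Suc m * m)"
    by (rule sum.nat_diff_reindex)
  finally have "card (basic_words3 g) = (\<Sum>m<g. Suc m * m)" .
  moreover have "3 * (\<Sum>m<g. Suc m * m) + g = g ^ 3"
    by (induction g) (auto simp: power3_eq_cube algebra_simps)
  ultimately show ?thesis
    by simp
qed

lemma real_card_basic_words23:
  "real (card (basic_words2 g \<union> basic_words3 g)) = (2 * real g ^ 3 + 3 * real g ^ 2 - 5 * real g) / 6"
proof -
  have "2 * (g choose 2) + g = g ^ 2"
    by (induction g) (simp_all add: numeral_2_eq_2 power2_eq_square)
  then have "2 * real (g choose 2) + real g = real g ^ 2"
    by (metis of_nat_add of_nat_mult of_nat_numeral of_nat_power)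
  moreover have "3 * real (card (basic_words3 g)) + real g = real g ^ 3"
    using card_basic_words3 by (metis of_nat_add of_nat_mult of_nat_numeral of_nat_power)
  moreover have "real (card (basic_words2 g \<union> basic_words3 g)) = real (g choose 2) + real (card (basic_words3 g))"
    by (simp add: card_basic_words23 card_basic_words2)
  ultimately show ?thesis
    by (simp add: field_simps)
qed

theorem corollary3p5:
  fixes g :: nat
  assumes "alg_closed TYPE('k::field_char_0)"
    and "g \<ge> 3"
  shows "lie_alpha (wscale :: 'k \<Rightarrow> _) (free_nilp g 3) (tbracket 3)
           = lie_dim (wscale :: 'k \<Rightarrow> _) (lie_center (free_nilp g 3) (tbracket 3)) + (g choose 2)
    \<and> lie_dim (wscale :: 'k \<Rightarrow> _) (lie_center (free_nilp g 3) (tbracket 3)) + (g choose 2)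
           = lie_index (wscale :: 'k \<Rightarrow> _) (free_nilp g 3) (tbracket 3) + g
    \<and> real (lie_index (wscale :: 'k \<Rightarrow> _) (free_nilp g 3) (tbracket 3) + g)
           = (2 * real g ^ 3 + 3 * real g ^ 2 - 5 * real g) / 6"
proof -
  have alpha: "lie_alpha (wscale :: 'k \<Rightarrow> _) (free_nilp g 3) (tbracket 3)
      = card (basic_words2 g \<union> basic_words3 g)"
    using assms(2) by (intro lie_alpha_free_nilp3) simp
  have "lie_dim (wscale :: 'k \<Rightarrow> _) (lie_center (free_nilp g 3) (tbracket 3))
      = W.dim (W.span (basic ` basic_words3 g) :: (nat list \<Rightarrow> 'k) set)"
    using assms(2) by (simp only: lie_dim_def center_free_nilp3)
  also have "\<dots> = card (basic_words3 g)"
    by (rule dim_span_basic[of _ g]) (simp add: basic_words_def)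
  finally have center: "lie_dim (wscale :: 'k \<Rightarrow> _) (lie_center (free_nilp g 3) (tbracket 3))
      = card (basic_words3 g)" .
  have index: "lie_index (wscale :: 'k \<Rightarrow> _) (free_nilp g 3) (tbracket 3) + g
      = card (basic_words2 g \<union> basic_words3 g)"
    using assms(2) by (rule lie_index_free_nilp3)
  have card: "card (basic_words3 g) + (g choose 2) = card (basic_words2 g \<union> basic_words3 g)"
    by (simp add: card_basic_words23 card_basic_words2)
  show ?thesis
    unfolding alpha center index card using real_card_basic_words23[of g] by simp
qed

end
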